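(* Let $0<\alpha\le\delta<\infty$ and $0<\gamma<\tfrac13$, and define $\mathcal R^a_1(a)_k=\frac{1}{k+1}\sum_{n=0}^k a_na_{k-n}$ for $k\in\mathbb N_0$. Then $\mathcal R^a_1$, acting on $X_{\alpha,\delta}$, is a strict contraction with respect to $d(a,b)=\sum_{k\ge0}(\gamma/\delta)^k|a_k-b_k|$: there is $C<1$ such that $d(\mathcal R^a_1(a),\mathcal R^a_1(b))\le C\,d(a,b)$ for all $a,b\in X_{\alpha,\delta}$.
   Context: $X_{\alpha,\delta}$ is the set of real sequences $a=(a_k)_{k\ge0}$ with $a_0=1$, $a_1=\alpha$, $0\le a_k\le\delta^k$ for $k\ge2$. *)

theory Defs
  imports Complex_Main
begin

definition Xset :: "real \<Rightarrow> real \<Rightarrow> (nat \<Rightarrow> real) set" where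
  "Xset \<alpha> \<delta> = {a. a 0 = 1 \<and> a 1 = \<alpha> \<and> (\<forall>k\<ge>2. 0 \<le> a k \<and> a k \<le> \<delta> ^ k)}"

definition R1 :: "(nat \<Rightarrow> real) \<Rightarrow> nat \<Rightarrow> real" where
  "R1 a k = (1 / real (k + 1)) * (\<Sum>n = 0..k. a n * a (k - n))"

definition wdist :: "real \<Rightarrow> real \<Rightarrow> (nat \<Rightarrow> real) \<Rightarrow> (nat \<Rightarrow> real) \<Rightarrow> real" where
  "wdist \<gamma> \<delta> a b = (\<Sum>k. (\<gamma> / \<delta>) ^ k * \<bar>a k - b k\<bar>)"

end

theory Submission
  imports Defs
begin

text \<open>Split \<open>a n * a (k-n) - b n * b (k-n) = a n * (a (k-n) - b (k-n)) + (a n - b n) * b (k-n)\<close>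
  and use \<open>\<bar>a n\<bar>, \<bar>b n\<bar> \<le> \<delta>^n\<close>: the \<open>k\<close>-th weighted difference \<open>(\<gamma>/\<delta>)^k \<bar>R1 a k - R1 b k\<bar>\<close>
  is at most \<open>2/(k+1)\<close> times the \<open>k\<close>-th term of the Cauchy product of the weighted differences
  \<open>(\<gamma>/\<delta>)^m \<bar>a m - b m\<bar>\<close> with the geometric sequence \<open>\<gamma>^j\<close>. Sequences in \<open>Xset \<alpha> \<delta>\<close> agree
  at the indices 0 and 1, so only \<open>k \<ge> 2\<close> contributes, where \<open>2/(k+1) \<le> 2/3\<close>. Summing the
  Cauchy product gives the constant \<open>2/(3(1-\<gamma>))\<close>, which is below 1 exactly when \<open>\<gamma> < 1/3\<close>.\<close>

lemma Xset_abs_le: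
  assumes "a \<in> Xset \<alpha> \<delta>" and "\<bar>\<alpha>\<bar> \<le> \<delta>"
  shows "\<bar>a k\<bar> \<le> \<delta> ^ k"
proof (cases "k < 2")
  case True
  then have "k = 0 \<or> k = 1" by auto
  then show ?thesis using assms by (auto simp: Xset_def)
next
  case False
  then show ?thesis using assms by (auto simp: Xset_def)
qed

lemma R1_diff:
  "R1 a k - R1 b k =
     1 / real (k + 1) * (\<Sum>n\<le>k. a n * (a (k - n) - b (k - n)) + (a n - b n) * b (k - n))"
proof -
  have "(\<Sum>n\<le>k. a n * (a (k - n) - b (k - n)) + (a n - b n) * b (k - n))
      = (\<Sum>n\<le>k. a n * a (k - n)) - (\<Sum>n\<le>k. b n * b (k - n))"
    by (simp add: sum_subtractf[symmetric] algebra_simps)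
  then show ?thesis by (simp add: R1_def atLeast0AtMost right_diff_distrib)
qed

lemma R1_diff_abs_le:
  assumes a: "\<And>n. \<bar>a n\<bar> \<le> \<delta> ^ n" and b: "\<And>n. \<bar>b n\<bar> \<le> \<delta> ^ n"
  shows "\<bar>R1 a k - R1 b k\<bar> \<le> 2 / real (k + 1) * (\<Sum>m\<le>k. \<delta> ^ (k - m) * \<bar>a m - b m\<bar>)"
proof -
  have summand_le: "\<bar>a n * (a (k - n) - b (k - n)) + (a n - b n) * b (k - n)\<bar>
      \<le> \<delta> ^ n * \<bar>a (k - n) - b (k - n)\<bar> + \<delta> ^ (k - n) * \<bar>a n - b n\<bar>" for n
  proof -
    have "\<bar>a n * (a (k - n) - b (k - n)) + (a n - b n) * b (k - n)\<bar>
        \<le> \<bar>a n\<bar> * \<bar>a (k - n) - b (k - n)\<bar> + \<bar>b (k - n)\<bar> * \<bar>a n - b n\<bar>"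
      by (metis abs_mult abs_triangle_ineq mult.commute)
    also have "\<dots> \<le> \<delta> ^ n * \<bar>a (k - n) - b (k - n)\<bar> + \<delta> ^ (k - n) * \<bar>a n - b n\<bar>"
      using a b by (intro add_mono mult_right_mono) auto
    finally show ?thesis .
  qed
  have reflect: "(\<Sum>n\<le>k. \<delta> ^ n * \<bar>a (k - n) - b (k - n)\<bar>) = (\<Sum>m\<le>k. \<delta> ^ (k - m) * \<bar>a m - b m\<bar>)"
    using sum.atLeastAtMost_rev[of "\<lambda>m. \<delta> ^ (k - m) * \<bar>a m - b m\<bar>" 0 k]
    by (simp add: atLeast0AtMost)
  have "\<bar>R1 a k - R1 b k\<bar>
      = 1 / real (k + 1) * \<bar>\<Sum>n\<le>k. a n * (a (k - n) - b (k - n)) + (a n - b n) * b (k - n)\<bar>"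
    by (simp add: R1_diff abs_mult)
  also have "\<dots> \<le> 1 / real (k + 1) *
      (\<Sum>n\<le>k. \<delta> ^ n * \<bar>a (k - n) - b (k - n)\<bar> + \<delta> ^ (k - n) * \<bar>a n - b n\<bar>)"
    by (intro mult_left_mono order.trans[OF sum_abs sum_mono] summand_le) auto
  also have "\<dots> = 2 / real (k + 1) * (\<Sum>m\<le>k. \<delta> ^ (k - m) * \<bar>a m - b m\<bar>)"
    by (simp add: sum.distrib reflect)
  finally show ?thesis .
qed

lemma R1_diff_weighted_le:
  fixes \<gamma> \<delta> :: real
  assumes "0 < \<delta>" and "0 \<le> \<gamma>"
    and "\<And>n. \<bar>a n\<bar> \<le> \<delta> ^ n" and "\<And>n. \<bar>b n\<bar> \<le> \<delta> ^ n"
  shows "(\<gamma> / \<delta>) ^ k * \<bar>R1 a k - R1 b k\<bar>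
    \<le> 2 / real (k + 1) * (\<Sum>m\<le>k. (\<gamma> / \<delta>) ^ m * \<bar>a m - b m\<bar> * \<gamma> ^ (k - m))"
proof -
  have reweight: "(\<gamma> / \<delta>) ^ k * \<delta> ^ (k - m) * c = (\<gamma> / \<delta>) ^ m * c * \<gamma> ^ (k - m)"
    if "m \<le> k" for m c
  proof -
    have "(\<gamma> / \<delta>) ^ k = (\<gamma> / \<delta>) ^ m * (\<gamma> / \<delta>) ^ (k - m)"
      using that by (simp add: power_add[symmetric])
    then show ?thesis using \<open>0 < \<delta>\<close> by (simp add: power_divide)
  qed
  have "(\<gamma> / \<delta>) ^ k * \<bar>R1 a k - R1 b k\<bar>
      \<le> (\<gamma> / \<delta>) ^ k * (2 / real (k + 1) * (\<Sum>m\<le>k. \<delta> ^ (k - m) * \<bar>a m - b m\<bar>))"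
    using assms by (intro mult_left_mono R1_diff_abs_le) auto
  also have "\<dots> = 2 / real (k + 1) * (\<Sum>m\<le>k. (\<gamma> / \<delta>) ^ k * \<delta> ^ (k - m) * \<bar>a m - b m\<bar>)"
    by (simp add: sum_distrib_left mult_ac)
  also have "\<dots> = 2 / real (k + 1) * (\<Sum>m\<le>k. (\<gamma> / \<delta>) ^ m * \<bar>a m - b m\<bar> * \<gamma> ^ (k - m))"
    by (intro arg_cong[where f = "(*) _"] sum.cong refl reweight) simp
  finally show ?thesis .
qed

lemma suminf_le_geometric_convolution:
  fixes E F :: "nat \<Rightarrow> real" and \<gamma> c :: real
  assumes "0 \<le> \<gamma>" and "\<gamma> < 1"
    and "\<And>m. 0 \<le> E m" and "summable E"
    and F_nonneg: "\<And>k. 0 \<le> F k" and F_le: "\<And>k. F k \<le> c * (\<Sum>m\<le>k. E m * \<gamma> ^ (k - m))"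
  shows "suminf F \<le> c / (1 - \<gamma>) * suminf E"
proof -
  define S where "S k = (\<Sum>m\<le>k. E m * \<gamma> ^ (k - m))" for k
  have "summable (\<lambda>m. norm (E m))" and "summable (\<lambda>j. norm (\<gamma> ^ j))"
    using assms by (simp_all add: summable_geometric)
  from Cauchy_product_sums[OF this] have "S sums (suminf E / (1 - \<gamma>))"
    using assms by (simp add: S_def[abs_def] suminf_geometric)
  then have cS_sums: "(\<lambda>k. c * S k) sums (c / (1 - \<gamma>) * suminf E)"
    by (metis sums_mult times_divide_eq_right mult.commute)
  have "summable F"
    by (rule summable_comparison_test[of _ "\<lambda>k. c * S k"])
       (use F_nonneg F_le cS_sums in \<open>auto simp: S_def sums_iff\<close>)
  with F_le cS_sums have "suminf F \<le> (\<Sum>k. c * S k)"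
    by (intro suminf_le) (auto simp: S_def sums_iff)
  also have "\<dots> = c / (1 - \<gamma>) * suminf E"
    using cS_sums by (rule sums_unique[symmetric])
  finally show ?thesis .
qed

lemma wdist_R1_le:
  fixes \<alpha> \<delta> \<gamma> :: real
  assumes "\<bar>\<alpha>\<bar> \<le> \<delta>" and "0 < \<delta>" and "0 \<le> \<gamma>" and "\<gamma> < 1"
    and a: "a \<in> Xset \<alpha> \<delta>" and b: "b \<in> Xset \<alpha> \<delta>"
  shows "wdist \<gamma> \<delta> (R1 a) (R1 b) \<le> 2 / (3 * (1 - \<gamma>)) * wdist \<gamma> \<delta> a b"
proof -
  define E where "E m = (\<gamma> / \<delta>) ^ m * \<bar>a m - b m\<bar>" for m
  define F where "F k = (\<gamma> / \<delta>) ^ k * \<bar>R1 a k - R1 b k\<bar>" for k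
  have a_le: "\<bar>a n\<bar> \<le> \<delta> ^ n" and b_le: "\<bar>b n\<bar> \<le> \<delta> ^ n" for n
    using Xset_abs_le[OF a] Xset_abs_le[OF b] assms(1) by auto
  have E_nonneg: "0 \<le> E m" for m
    using assms by (simp add: E_def)
  have E_le: "E m \<le> 2 * \<gamma> ^ m" for m
  proof -
    have "E m \<le> (\<gamma> / \<delta>) ^ m * (2 * \<delta> ^ m)"
      unfolding E_def using a_le[of m] b_le[of m] assms
      by (intro mult_left_mono) (auto simp: abs_diff_le_iff abs_le_iff)
    then show ?thesis using \<open>0 < \<delta>\<close> by (simp add: power_divide)
  qed
  have E_01: "E 0 = 0" "E (Suc 0) = 0"
    using a b by (auto simp: E_def Xset_def)
  have "summable E"
    by (rule summable_comparison_test[of _ "\<lambda>m. 2 * \<gamma> ^ m"])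
       (use E_nonneg E_le assms in \<open>auto intro!: summable_mult summable_geometric\<close>)
  moreover have "F k \<le> 2 / 3 * (\<Sum>m\<le>k. E m * \<gamma> ^ (k - m))" for k
  proof -
    have "F k \<le> 2 / real (k + 1) * (\<Sum>m\<le>k. E m * \<gamma> ^ (k - m))"
      unfolding F_def E_def using assms a_le b_le by (intro R1_diff_weighted_le) auto
    also have "\<dots> \<le> 2 / 3 * (\<Sum>m\<le>k. E m * \<gamma> ^ (k - m))"
    proof (cases "k < 2")
      case True
      then show ?thesis by (auto simp: E_01 less_2_cases_iff)
    next
      case False
      then show ?thesis using E_nonneg assms
        by (intro mult_right_mono sum_nonneg) (auto simp: field_simps)
    qed
    finally show ?thesis .
  qed
  moreover have "0 \<le> F k" for k
    using assms by (simp add: F_def)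
  ultimately have "suminf F \<le> 2 / 3 / (1 - \<gamma>) * suminf E"
    using assms E_nonneg by (intro suminf_le_geometric_convolution) auto
  then show ?thesis
    by (simp add: wdist_def F_def[abs_def] E_def[abs_def])
qed

theorem proposition12:
  fixes \<alpha> \<delta> \<gamma> :: real
  assumes "0 < \<alpha>" and "\<alpha> \<le> \<delta>" and "0 < \<gamma>" and "\<gamma> < 1 / 3"
  shows "\<exists>C. 0 \<le> C \<and> C < 1 \<and>
           (\<forall>a\<in>Xset \<alpha> \<delta>. \<forall>b\<in>Xset \<alpha> \<delta>.
              wdist \<gamma> \<delta> (R1 a) (R1 b) \<le> C * wdist \<gamma> \<delta> a b)"
proof (intro exI conjI ballI)
  show "0 \<le> 2 / (3 * (1 - \<gamma>))" and "2 / (3 * (1 - \<gamma>)) < 1"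
    using assms by (auto simp: field_simps)
  show "wdist \<gamma> \<delta> (R1 a) (R1 b) \<le> 2 / (3 * (1 - \<gamma>)) * wdist \<gamma> \<delta> a b"
    if "a \<in> Xset \<alpha> \<delta>" and "b \<in> Xset \<alpha> \<delta>" for a b
    using assms that by (intro wdist_R1_le) auto
qed

end
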